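(* Let $r$ be a normalized formal generalized $r$-matrix. Then, with respect to the bilinear form $\kappa_0$ on $\mathfrak g(\!(z)\!)$, one has $\mathfrak g(r)^\perp=\mathfrak g(\bar r)$. Moreover, $r$ is skew-symmetric if and only if $\mathfrak g(r)^\perp=\mathfrak g(r)$.
   Context: $\Bbbk$ is a field of characteristic $0$, $\mathfrak g$ a finite-dimensional semisimple Lie algebra over $\Bbbk$ with Killing form $\kappa$, $\kappa$-orthonormal basis $\{b_i\}_{i=1}^d$ and Casimir $\gamma=\sum_ib_i\otimes b_i$; $\frac1{x-y}=\sum_{k\ge0}x^{-k-1}y^k$. A series $r\in(\mathfrak g\otimes\mathfrak g)(\!(x)\!)[\![y]\!]$ is in normalized standard form if $r=\frac{\gamma}{x-y}+r_0$, $r_0\in(\mathfrak g\otimes\mathfrak g)[\![x,y]\!]$; $\bar r(x,y)=\frac{\gamma}{x-y}-\tau(r_0(y,x))$ ($\tau$ the flip); skew-symmetric means $\bar r=r$. With $s^{ij}$ meaning substitution $(x,y)=(x_i,x_j)$ and placement in tensor positions $i,j$ in $(U(\mathfrak g)^{\otimes3})\otimes\Bbbk(\!(x_1)\!)(\!(x_2)\!)[\![x_3]\!]$, a normalized formal generalized $r$-matrix is such $r$ with $[r^{12},r^{13}]+[r^{12},r^{23}]+[r^{13},\bar r^{23}]=0$. For $s=\sum_{k,i}s_{k,i}(x)\otimes b_iy^k$, $\mathfrak g(s)=\mathrm{span}_\Bbbk\{s_{k,i}(z)\}$. The form $\kappa_0$ on $\mathfrak g(\!(z)\!)$ is $\kappa_0(s,t)=\mathrm{res}_0\kappa(s,t)\,dz=\sum_{k+\ell=-1}\kappa(s_k,t_\ell)$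 for $s=\sum s_kz^k$, $t=\sum t_kz^k$, and $\perp$ denotes orthogonal complement with respect to $\kappa_0$. *)

theory Defs
  imports Main "HOL-Library.Groups_Big_Fun" "HOL-Library.Function_Algebras"
begin

text \<open>
  The finite-dimensional Lie algebra g over the field 'k is realised in
  coordinates as the space of functions 'n => 'k ('n a finite index type, so dim g = CARD('n)),
  with Lie bracket br.  Tensors in g (x) g and g (x) g (x) g are coordinate arrays with
  respect to the standard basis.  A series in (g(x)g)((x))[[y]] is a map
  int => nat => tensor (coefficient of x^i y^k).  Series in k((x1))((x2))[[x3]] with
  values in a tensor space are maps int => int => int => tensor, multiplied by the
  Cauchy product (finitely supported sums, Sum_any).
\<close>

type_synonym ('n,'k) vec = "'n \<Rightarrow> 'k"
type_synonym ('n,'k) tens2 = "'n \<Rightarrow> 'n \<Rightarrow> 'k"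
type_synonym ('n,'k) tens3 = "'n \<Rightarrow> 'n \<Rightarrow> 'n \<Rightarrow> 'k"

definition vscale :: "'k::field \<Rightarrow> ('n,'k) vec \<Rightarrow> ('n,'k) vec" where
  "vscale c v = (\<lambda>p. c * v p)"

definition ei :: "'n \<Rightarrow> ('n,'k::field) vec" where
  "ei q = (\<lambda>p. if p = q then 1 else 0)"

definition lin_span :: "('k \<Rightarrow> 'v \<Rightarrow> 'v) \<Rightarrow> 'v::comm_monoid_add set \<Rightarrow> 'v set" where
  "lin_span sc S = {v. \<exists>t c. finite t \<and> t \<subseteq> S \<and> v = (\<Sum>a\<in>t. sc (c a) a)}"

definition lie_algebra :: "(('n,'k::field) vec \<Rightarrow> ('n,'k) vec \<Rightarrow> ('n,'k) vec) \<Rightarrow> bool" where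
  "lie_algebra br \<longleftrightarrow>
     (\<forall>x y z. br (x + y) z = br x z + br y z) \<and>
     (\<forall>x y z. br x (y + z) = br x y + br x z) \<and>
     (\<forall>c x y. br (vscale c x) y = vscale c (br x y)) \<and>
     (\<forall>c x y. br x (vscale c y) = vscale c (br x y)) \<and>
     (\<forall>x. br x x = 0) \<and>
     (\<forall>x y z. br x (br y z) + br y (br z x) + br z (br x y) = 0)"

definition killing :: "(('n::finite,'k::field) vec \<Rightarrow> ('n,'k) vec \<Rightarrow> ('n,'k) vec)
    \<Rightarrow> ('n,'k) vec \<Rightarrow> ('n,'k) vec \<Rightarrow> 'k" where
  "killing br a b = (\<Sum>q\<in>UNIV. br a (br b (ei q)) q)"

definition lie_subspace :: "('n,'k::field) vec set \<Rightarrow> bool" where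
  "lie_subspace I \<longleftrightarrow> 0 \<in> I \<and> (\<forall>x\<in>I. \<forall>y\<in>I. x + y \<in> I) \<and> (\<forall>c. \<forall>x\<in>I. vscale c x \<in> I)"

definition lie_ideal :: "(('n,'k::field) vec \<Rightarrow> ('n,'k) vec \<Rightarrow> ('n,'k) vec) \<Rightarrow> ('n,'k) vec set \<Rightarrow> bool" where
  "lie_ideal br I \<longleftrightarrow> lie_subspace I \<and> (\<forall>x. \<forall>y\<in>I. br x y \<in> I)"

fun derived_series :: "(('n,'k::field) vec \<Rightarrow> ('n,'k) vec \<Rightarrow> ('n,'k) vec) \<Rightarrow> ('n,'k) vec set \<Rightarrow> nat \<Rightarrow> ('n,'k) vec set" where
  "derived_series br I 0 = I"
| "derived_series br I (Suc m) =
     lin_span vscale {br x y | x y. x \<in> derived_series br I m \<and> y \<in> derived_series br I m}"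

definition solvable_subalg :: "(('n,'k::field) vec \<Rightarrow> ('n,'k) vec \<Rightarrow> ('n,'k) vec) \<Rightarrow> ('n,'k) vec set \<Rightarrow> bool" where
  "solvable_subalg br I \<longleftrightarrow> (\<exists>m. derived_series br I m = {0})"

definition semisimple :: "(('n,'k::field) vec \<Rightarrow> ('n,'k) vec \<Rightarrow> ('n,'k) vec) \<Rightarrow> bool" where
  "semisimple br \<longleftrightarrow> (\<forall>I. lie_ideal br I \<and> solvable_subalg br I \<longrightarrow> I = {0})"

definition killing_orthonormal :: "(('n::finite,'k::field) vec \<Rightarrow> ('n,'k) vec \<Rightarrow> ('n,'k) vec) \<Rightarrow> ('n \<Rightarrow> ('n,'k) vec) \<Rightarrow> bool" where
  "killing_orthonormal br b \<longleftrightarrow> (\<forall>i j. killing br (b i) (b j) = (if i = j then 1 else 0))"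

definition casimir :: "('n::finite \<Rightarrow> ('n,'k::field) vec) \<Rightarrow> ('n,'k) tens2" where
  "casimir b = (\<lambda>p q. \<Sum>i\<in>UNIV. b i p * b i q)"

definition flip2 :: "('n,'k) tens2 \<Rightarrow> ('n,'k) tens2" where
  "flip2 T = (\<lambda>p q. T q p)"

text \<open>gamma/(x-y) = sum_{k>=0} gamma x^(-k-1) y^k, as an element of (g(x)g)((x))[[y]].\<close>
definition cauchy_kernel :: "('n,'k::field) tens2 \<Rightarrow> int \<Rightarrow> nat \<Rightarrow> ('n,'k) tens2" where
  "cauchy_kernel \<gamma> i k = (if i = - int k - 1 then \<gamma> else 0)"

text \<open>Normalized standard form: r = gamma/(x-y) + r0 with r0 in (g(x)g)[[x,y]], i.e. r agrees
  with gamma/(x-y) at all negative powers of x.\<close>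
definition normalized_standard_form ::
    "('n::finite \<Rightarrow> ('n,'k::field) vec) \<Rightarrow> (int \<Rightarrow> nat \<Rightarrow> ('n,'k) tens2) \<Rightarrow> bool" where
  "normalized_standard_form b r \<longleftrightarrow> (\<forall>i k. i < 0 \<longrightarrow> r i k = cauchy_kernel (casimir b) i k)"

definition regular_part :: "('n::finite \<Rightarrow> ('n,'k::field) vec) \<Rightarrow> (int \<Rightarrow> nat \<Rightarrow> ('n,'k) tens2) \<Rightarrow> nat \<Rightarrow> nat \<Rightarrow> ('n,'k) tens2" where
  "regular_part b r i k = r (int i) k - cauchy_kernel (casimir b) (int i) k"

text \<open>rbar(x,y) = gamma/(x-y) - tau(r0(y,x)).\<close>
definition rbar :: "('n::finite \<Rightarrow> ('n,'k::field) vec) \<Rightarrow> (int \<Rightarrow> nat \<Rightarrow> ('n,'k) tens2) \<Rightarrow> int \<Rightarrow> nat \<Rightarrow> ('n,'k) tens2" where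
  "rbar b r i k = cauchy_kernel (casimir b) i k
      - (if 0 \<le> i then flip2 (regular_part b r k (nat i)) else 0)"

definition skew_symmetric :: "('n::finite \<Rightarrow> ('n,'k::field) vec) \<Rightarrow> (int \<Rightarrow> nat \<Rightarrow> ('n,'k) tens2) \<Rightarrow> bool" where
  "skew_symmetric b r \<longleftrightarrow> rbar b r = r"

text \<open>Placement of a two-variable series s(x,y) as s^{ij} = s(x_i,x_j) in k((x1))((x2))[[x3]].\<close>
definition emb12 :: "(int \<Rightarrow> nat \<Rightarrow> 'a::zero) \<Rightarrow> int \<Rightarrow> int \<Rightarrow> int \<Rightarrow> 'a" where
  "emb12 s a b c = (if 0 \<le> b \<and> c = 0 then s a (nat b) else 0)"
definition emb13 :: "(int \<Rightarrow> nat \<Rightarrow> 'a::zero) \<Rightarrow> int \<Rightarrow> int \<Rightarrow> int \<Rightarrow> 'a" where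
  "emb13 s a b c = (if b = 0 \<and> 0 \<le> c then s a (nat c) else 0)"
definition emb23 :: "(int \<Rightarrow> nat \<Rightarrow> 'a::zero) \<Rightarrow> int \<Rightarrow> int \<Rightarrow> int \<Rightarrow> 'a" where
  "emb23 s a b c = (if a = 0 \<and> 0 \<le> c then s b (nat c) else 0)"

definition conv3 :: "('a \<Rightarrow> 'b \<Rightarrow> 'c::comm_monoid_add) \<Rightarrow> (int \<Rightarrow> int \<Rightarrow> int \<Rightarrow> 'a) \<Rightarrow> (int \<Rightarrow> int \<Rightarrow> int \<Rightarrow> 'b)
     \<Rightarrow> int \<Rightarrow> int \<Rightarrow> int \<Rightarrow> 'c" where
  "conv3 op S T a b c =
     Sum_any (\<lambda>(a1, b1, c1). op (S a1 b1 c1) (T (a - a1) (b - b1) (c - c1)))"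

text \<open>Commutators in U(g)^(x)3 of the placed tensors; they lie in g(x)g(x)g:
  [A^{12},B^{13}] = sum [a,c](x)b(x)d, [A^{12},B^{23}] = sum a(x)[b,c](x)d,
  [A^{13},B^{23}] = sum a(x)c(x)[b,d]  for A = sum a(x)b, B = sum c(x)d.\<close>
definition comm_12_13 :: "(('n::finite,'k::field) vec \<Rightarrow> ('n,'k) vec \<Rightarrow> ('n,'k) vec) \<Rightarrow> ('n,'k) tens2 \<Rightarrow> ('n,'k) tens2 \<Rightarrow> ('n,'k) tens3" where
  "comm_12_13 br A B = (\<lambda>u q t. \<Sum>p\<in>UNIV. \<Sum>s\<in>UNIV. A p q * B s t * br (ei p) (ei s) u)"
definition comm_12_23 :: "(('n::finite,'k::field) vec \<Rightarrow> ('n,'k) vec \<Rightarrow> ('n,'k) vec) \<Rightarrow> ('n,'k) tens2 \<Rightarrow> ('n,'k) tens2 \<Rightarrow> ('n,'k) tens3" where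
  "comm_12_23 br A B = (\<lambda>p v t. \<Sum>q\<in>UNIV. \<Sum>s\<in>UNIV. A p q * B s t * br (ei q) (ei s) v)"
definition comm_13_23 :: "(('n::finite,'k::field) vec \<Rightarrow> ('n,'k) vec \<Rightarrow> ('n,'k) vec) \<Rightarrow> ('n,'k) tens2 \<Rightarrow> ('n,'k) tens2 \<Rightarrow> ('n,'k) tens3" where
  "comm_13_23 br A B = (\<lambda>p s w. \<Sum>q\<in>UNIV. \<Sum>t\<in>UNIV. A p q * B s t * br (ei q) (ei t) w)"

text \<open>[r^12, r^13] + [r^12, r^23] + [r^13, rbar^23] = 0.\<close>
definition generalized_cybe ::
    "(('n::finite,'k::field) vec \<Rightarrow> ('n,'k) vec \<Rightarrow> ('n,'k) vec) \<Rightarrow> ('n \<Rightarrow> ('n,'k) vec)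
      \<Rightarrow> (int \<Rightarrow> nat \<Rightarrow> ('n,'k) tens2) \<Rightarrow> bool" where
  "generalized_cybe br b r \<longleftrightarrow>
     (\<forall>a1 a2 a3.
        conv3 (comm_12_13 br) (emb12 r) (emb13 r) a1 a2 a3
      + conv3 (comm_12_23 br) (emb12 r) (emb23 r) a1 a2 a3
      + conv3 (comm_13_23 br) (emb13 r) (emb23 (rbar b r)) a1 a2 a3 = 0)"

definition normalized_formal_gen_r_matrix ::
    "(('n::finite,'k::field) vec \<Rightarrow> ('n,'k) vec \<Rightarrow> ('n,'k) vec) \<Rightarrow> ('n \<Rightarrow> ('n,'k) vec)
      \<Rightarrow> (int \<Rightarrow> nat \<Rightarrow> ('n,'k) tens2) \<Rightarrow> bool" where
  "normalized_formal_gen_r_matrix br b r \<longleftrightarrow> normalized_standard_form b r \<and> generalized_cybe br b r"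

text \<open>g((z)): Laurent series int => g with support bounded below.\<close>
definition laurent :: "(int \<Rightarrow> ('n,'k::zero) vec) set" where
  "laurent = {s. \<exists>N. \<forall>j<N. s j = 0}"

definition sscale :: "'k::field \<Rightarrow> (int \<Rightarrow> ('n,'k) vec) \<Rightarrow> (int \<Rightarrow> ('n,'k) vec)" where
  "sscale c s = (\<lambda>j p. c * s j p)"

text \<open>Writing s = sum_{k,i} s_{k,i}(x) (x) b_i y^k, the component s_{k,i}(x) in g((x));
  since b is kappa-orthonormal it is obtained by contracting the second tensor factor
  with kappa(-, b_i).\<close>
definition component :: "(('n::finite,'k::field) vec \<Rightarrow> ('n,'k) vec \<Rightarrow> ('n,'k) vec) \<Rightarrow> ('n \<Rightarrow> ('n,'k) vec)
      \<Rightarrow> (int \<Rightarrow> nat \<Rightarrow> ('n,'k) tens2) \<Rightarrow> nat \<Rightarrow> 'n \<Rightarrow> int \<Rightarrow> ('n,'k) vec" where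
  "component br b s k i = (\<lambda>j p. \<Sum>q\<in>UNIV. s j k p q * killing br (ei q) (b i))"

definition g_of :: "(('n::finite,'k::field) vec \<Rightarrow> ('n,'k) vec \<Rightarrow> ('n,'k) vec) \<Rightarrow> ('n \<Rightarrow> ('n,'k) vec)
      \<Rightarrow> (int \<Rightarrow> nat \<Rightarrow> ('n,'k) tens2) \<Rightarrow> (int \<Rightarrow> ('n,'k) vec) set" where
  "g_of br b s = lin_span sscale {component br b s k i | k i. True}"

text \<open>kappa_0(s,t) = res_0 kappa(s,t) dz = sum_{k+l=-1} kappa(s_k,t_l).\<close>
definition kappa0 :: "(('n::finite,'k::field) vec \<Rightarrow> ('n,'k) vec \<Rightarrow> ('n,'k) vec)
      \<Rightarrow> (int \<Rightarrow> ('n,'k) vec) \<Rightarrow> (int \<Rightarrow> ('n,'k) vec) \<Rightarrow> 'k" where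
  "kappa0 br s t = Sum_any (\<lambda>m. killing br (s m) (t (- 1 - m)))"

definition kappa0_orth :: "(('n::finite,'k::field) vec \<Rightarrow> ('n,'k) vec \<Rightarrow> ('n,'k) vec)
      \<Rightarrow> (int \<Rightarrow> ('n,'k) vec) set \<Rightarrow> (int \<Rightarrow> ('n,'k) vec) set" where
  "kappa0_orth br W = {t \<in> laurent. \<forall>s\<in>W. kappa0 br s t = 0}"

end

theory Submission
  imports Defs "HOL.Vector_Spaces"
begin

text \<open>
  By normalization every component \<open>s\<^sub>k\<^sub>,\<^sub>i\<close> of \<open>r\<close>, and likewise of \<open>rbar\<close>, is
  \<open>b\<^sub>i z\<^bsup>-k-1\<^esup>\<close> plus a power series.  Pairing a component of \<open>r\<close> with one of \<open>rbar\<close>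
  under \<open>\<kappa>\<^sub>0\<close>, only the two cross terms between a principal part and a regular part
  survive, and they cancel because the regular part of \<open>rbar\<close> is the flipped regular
  part of \<open>r\<close>; hence \<open>g(rbar) \<subseteq> g(r)\<^sup>\<bottom>\<close>.  Conversely, subtracting components of \<open>rbar\<close>
  reduces any Laurent series modulo \<open>g(rbar)\<close> to a power series \<open>p\<close>, and
  \<open>\<kappa>\<^sub>0(s\<^sub>k\<^sub>,\<^sub>i, p) = \<kappa>(b\<^sub>i, p\<^sub>k)\<close>, so a power series in \<open>g(r)\<^sup>\<bottom>\<close> vanishes by
  nondegeneracy of \<open>\<kappa>\<close>.  If moreover \<open>g(r) = g(r)\<^sup>\<bottom>\<close>, the difference of corresponding
  components of \<open>rbar\<close> and \<open>r\<close> is a power series in \<open>g(r)\<^sup>\<bottom>\<close>, hence zero, so \<open>rbar = r\<close>.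
\<close>

section \<open>Coordinate vectors and Laurent series as vector spaces\<close>

lemma sum_fun_apply: "(\<Sum>a\<in>A. f a) x = (\<Sum>a\<in>A. f a x)"
  by (induction A rule: infinite_finite_induct) auto

declare plus_fun_apply[simp del] zero_fun_apply[simp del]

lemma vscale_apply: "vscale c v p = c * v p"
  by (simp add: vscale_def)

lemma ei_apply: "ei q p = (if p = q then 1 else 0)"
  by (simp add: ei_def)

lemma vec_eq_sum_ei: "(v::'n::finite \<Rightarrow> 'k::field) = (\<Sum>q\<in>UNIV. vscale (v q) (ei q))"
  by (rule ext) (simp add: sum_fun_apply vscale_apply ei_apply if_distrib zero_fun_apply cong: if_cong)

interpretation coord: vector_space "vscale :: 'k::field \<Rightarrow> ('n \<Rightarrow> 'k) \<Rightarrow> _"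
  by unfold_locales (auto simp: vscale_def algebra_simps fun_eq_iff plus_fun_apply)

lemma coord_independent_ei: "coord.independent (range (ei :: 'n \<Rightarrow> ('n, 'k::field) vec))"
  unfolding coord.independent_explicit_module
proof (intro allI impI)
  fix t u and v :: "('n, 'k) vec"
  assume t: "finite t" "t \<subseteq> range ei" "(\<Sum>v\<in>t. vscale (u v) v) = 0" "v \<in> t"
  then obtain q where q: "v = ei q" by auto
  have "(\<Sum>w\<in>t. vscale (u w) w) q = (\<Sum>w\<in>t. u w * w q)"
    by (simp add: sum_fun_apply vscale_apply)
  also have "\<dots> = (\<Sum>w\<in>{v}. u w * w q)"
  proof (rule sum.mono_neutral_right)
    show "\<forall>w\<in>t - {v}. u w * w q = 0"
    proof
      fix w assume "w \<in> t - {v}"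
      with t(2) q obtain q' where "w = ei q'" "q' \<noteq> q" by auto
      then show "u w * w q = 0" by (simp add: ei_apply)
    qed
  qed (use t in auto)
  also have "\<dots> = u v" using q by (simp add: ei_apply)
  finally show "u v = 0" using t(3) by (simp add: zero_fun_apply)
qed

lemma coord_span_ei: "coord.span (range (ei :: 'n::finite \<Rightarrow> ('n, 'k::field) vec)) = UNIV"
proof -
  have "w \<in> coord.span (range ei)" for w :: "('n, 'k) vec"
    by (subst vec_eq_sum_ei[of w]) (intro coord.span_sum coord.span_scale coord.span_base, auto)
  then show ?thesis by auto
qed

interpretation coord_fd: finite_dimensional_vector_space
    "vscale :: 'k::field \<Rightarrow> ('n::finite \<Rightarrow> 'k) \<Rightarrow> _" "range ei"
  by unfold_locales (use coord_independent_ei coord_span_ei in auto)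

lemma sscale_apply: "sscale c s j = vscale c (s j)"
  by (simp add: sscale_def vscale_def)

interpretation series: vector_space "sscale :: 'k::field \<Rightarrow> (int \<Rightarrow> 'n \<Rightarrow> 'k) \<Rightarrow> _"
  by unfold_locales (auto simp: sscale_def algebra_simps fun_eq_iff plus_fun_apply)

lemma lin_span_sscale: "lin_span sscale S = series.span S"
  unfolding lin_span_def series.span_explicit by blast

lemma series_subspace_laurent: "series.subspace (laurent :: (int \<Rightarrow> 'n \<Rightarrow> 'k::field) set)"
  unfolding series.subspace_def laurent_def
proof (intro conjI ballI allI)
  show "0 \<in> {s. \<exists>N. \<forall>j<N. s j = 0}" by (auto simp: zero_fun_apply)
next
  fix x y :: "int \<Rightarrow> 'n \<Rightarrow> 'k"
  assume "x \<in> {s. \<exists>N. \<forall>j<N. s j = 0}" "y \<in> {s. \<exists>N. \<forall>j<N. s j = 0}"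
  then obtain N M where "\<forall>j<N. x j = 0" "\<forall>j<M. y j = 0" by auto
  then show "x + y \<in> {s. \<exists>N. \<forall>j<N. s j = 0}"
    by (auto simp: plus_fun_apply intro!: exI[of _ "min N M"])
next
  fix c and x :: "int \<Rightarrow> 'n \<Rightarrow> 'k"
  assume "x \<in> {s. \<exists>N. \<forall>j<N. s j = 0}"
  then obtain N where "\<forall>j<N. x j = 0" by auto
  then show "sscale c x \<in> {s. \<exists>N. \<forall>j<N. s j = 0}"
    by (auto simp: sscale_def fun_eq_iff zero_fun_apply intro!: exI[of _ N])
qed

lemma series_span_subset_laurent: "S \<subseteq> laurent \<Longrightarrow> series.span S \<subseteq> laurent"
  using series.span_minimal series_subspace_laurent by blast

section \<open>The Killing form in coordinates\<close>

locale coord_lie_algebra =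
  fixes br :: "('n::finite \<Rightarrow> 'k::field) \<Rightarrow> ('n \<Rightarrow> 'k) \<Rightarrow> ('n \<Rightarrow> 'k)"
  assumes lie: "lie_algebra br"
begin

lemma br_add_left: "br (x + y) z = br x z + br y z"
  using lie by (simp add: lie_algebra_def)

lemma br_add_right: "br x (y + z) = br x y + br x z"
  using lie by (simp add: lie_algebra_def)

lemma br_scale_left: "br (vscale c x) y = vscale c (br x y)"
  using lie by (simp add: lie_algebra_def)

lemma br_scale_right: "br x (vscale c y) = vscale c (br x y)"
  using lie by (simp add: lie_algebra_def)

lemma br_zero_right: "br z 0 = 0"
  using br_add_right[of z 0 0] by simp

lemma br_sum_right: "br x (\<Sum>a\<in>A. vscale (c a) (f a)) = (\<Sum>a\<in>A. vscale (c a) (br x (f a)))"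
  by (induction A rule: infinite_finite_induct) (simp_all add: br_zero_right br_add_right br_scale_right)

lemma killing_add_left: "killing br (x + y) z = killing br x z + killing br y z"
  by (simp add: killing_def br_add_left sum.distrib plus_fun_apply)

lemma killing_add_right: "killing br z (x + y) = killing br z x + killing br z y"
  by (simp add: killing_def br_add_left br_add_right sum.distrib plus_fun_apply)

lemma killing_scale_left: "killing br (vscale c x) z = c * killing br x z"
  by (simp add: killing_def br_scale_left br_scale_right vscale_apply sum_distrib_left)

lemma killing_scale_right: "killing br z (vscale c x) = c * killing br z x"
  by (simp add: killing_def br_scale_left br_scale_right vscale_apply sum_distrib_left)

lemma killing_zero_left [simp]: "killing br 0 z = 0"
  using killing_add_left[of 0 0 z] by (metis add_0 add_cancel_right_right)

lemma killing_zero_right [simp]: "killing br z 0 = 0"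
  using killing_add_right[of z 0 0] by (metis add_0 add_cancel_right_right)

lemma killing_diff_left: "killing br (x - y) z = killing br x z - killing br y z"
  using killing_add_left[of y "x - y" z] by (simp add: algebra_simps)

lemma killing_uminus_right: "killing br z (- x) = - killing br z x"
  using killing_add_right[of z x "- x"] by (simp add: add_eq_0_iff)

lemma killing_sum_left:
  "killing br (\<Sum>a\<in>A. vscale (c a) (f a)) z = (\<Sum>a\<in>A. c a * killing br (f a) z)"
  by (induction A rule: infinite_finite_induct) (simp_all add: killing_add_left killing_scale_left)

lemma killing_sum_right:
  "killing br z (\<Sum>a\<in>A. vscale (c a) (f a)) = (\<Sum>a\<in>A. c a * killing br z (f a))"
  by (induction A rule: infinite_finite_induct) (simp_all add: killing_add_right killing_scale_right)

lemma killing_coords_left: "killing br v w = (\<Sum>x\<in>UNIV. v x * killing br (ei x) w)"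
  by (subst vec_eq_sum_ei[of v]) (rule killing_sum_left)

lemma killing_coords_right: "killing br w v = (\<Sum>x\<in>UNIV. v x * killing br w (ei x))"
  by (subst vec_eq_sum_ei[of v]) (rule killing_sum_right)

lemma killing_ei:
  "killing br (ei x) (ei a) = (\<Sum>u\<in>UNIV. \<Sum>y\<in>UNIV. br (ei a) (ei u) y * br (ei x) (ei y) u)"
proof -
  have "killing br (ei x) (ei a) = (\<Sum>u\<in>UNIV. br (ei x) (br (ei a) (ei u)) u)"
    by (simp add: killing_def)
  also have "\<dots> = (\<Sum>u\<in>UNIV. (\<Sum>y\<in>UNIV. vscale (br (ei a) (ei u) y) (br (ei x) (ei y))) u)"
    by (subst vec_eq_sum_ei[of "br (ei a) (ei u)" for u]) (simp add: br_sum_right)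
  finally show ?thesis by (simp add: sum_fun_apply vscale_apply)
qed

lemma killing_ei_commute: "killing br (ei x) (ei a) = killing br (ei a) (ei x)"
  unfolding killing_ei by (subst sum.swap) (simp add: mult.commute)

lemma killing_commute: "killing br v w = killing br w v"
proof -
  have bilinear: "killing br v w = (\<Sum>x\<in>UNIV. \<Sum>a\<in>UNIV. v x * w a * killing br (ei x) (ei a))" for v w
    by (subst killing_coords_left, subst killing_coords_right) (simp add: sum_distrib_left ac_simps)
  have "killing br v w = (\<Sum>a\<in>UNIV. \<Sum>x\<in>UNIV. v x * w a * killing br (ei x) (ei a))"
    unfolding bilinear[of v w] by (rule sum.swap)
  also have "\<dots> = (\<Sum>a\<in>UNIV. \<Sum>x\<in>UNIV. w a * v x * killing br (ei a) (ei x))"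
    by (intro sum.cong refl) (simp add: killing_ei_commute ac_simps)
  also have "\<dots> = killing br w v"
    by (simp add: bilinear[of w v])
  finally show ?thesis .
qed

end

locale killing_basis = coord_lie_algebra +
  fixes b
  assumes orthonormal: "killing_orthonormal br b"
begin

lemma killing_basis_basis: "killing br (b i) (b j) = (if i = j then 1 else 0)"
  using orthonormal by (simp add: killing_orthonormal_def)

lemma killing_sum_basis: "killing br (\<Sum>i\<in>UNIV. vscale (c i) (b i)) (b j) = c j"
  by (simp add: killing_sum_left killing_basis_basis if_distrib cong: if_cong)

lemma surj_basis_combination: "surj (\<lambda>c. \<Sum>i\<in>UNIV. vscale (c i) (b i))"
proof -
  let ?f = "\<lambda>c. \<Sum>i\<in>UNIV. vscale (c i) (b i)"
  have lin: "Vector_Spaces.linear vscale vscale ?f"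
    unfolding linear_iff
    by (auto simp: coord.vector_space_axioms vscale_def sum.distrib fun_eq_iff sum_fun_apply
        plus_fun_apply algebra_simps sum_distrib_left)
  have "inj ?f"
  proof (rule injI)
    fix c c' assume "?f c = ?f c'"
    then show "c = c'"
      using killing_sum_basis[of c] killing_sum_basis[of c'] by (metis ext)
  qed
  then show ?thesis
    using coord_fd.linear_inj_imp_surj[OF lin] by simp
qed

text \<open>Nondegeneracy of \<open>\<kappa>\<close> comes from the orthonormal basis alone: the \<open>b\<^sub>i\<close> are
  independent, hence span.\<close>

lemma killing_basis_eq_0_imp: "(\<And>i. killing br v (b i) = 0) \<Longrightarrow> v = 0"
proof -
  assume h: "\<And>i. killing br v (b i) = 0"
  obtain c where c: "v = (\<Sum>i\<in>UNIV. vscale (c i) (b i))"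
    using surjD[OF surj_basis_combination, of v] by blast
  have "c i = 0" for i
    using killing_sum_basis[of c i] h[of i] c by simp
  then show "v = 0"
    using c by (simp add: vscale_def zero_fun_def fun_eq_iff sum_fun_apply)
qed

lemma vec_eq_sum_killing_basis: "v = (\<Sum>i\<in>UNIV. vscale (killing br v (b i)) (b i))"
proof -
  have "v - (\<Sum>i\<in>UNIV. vscale (killing br v (b i)) (b i)) = 0"
    by (intro killing_basis_eq_0_imp) (simp add: killing_diff_left killing_sum_basis)
  then show ?thesis by simp
qed

end

section \<open>The residue pairing \<open>\<kappa>\<^sub>0\<close>\<close>

context coord_lie_algebra
begin

lemma finite_kappa0_support:
  assumes "s \<in> laurent" "t \<in> laurent"
  shows "finite {m. killing br (s m) (t (-1-m)) \<noteq> 0}"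
proof -
  obtain N M where N: "\<forall>j<N. s j = 0" and M: "\<forall>j<M. t j = 0"
    using assms by (auto simp: laurent_def)
  have "{m. killing br (s m) (t (-1-m)) \<noteq> 0} \<subseteq> {N..-1-M}"
  proof
    fix m assume "m \<in> {m. killing br (s m) (t (-1-m)) \<noteq> 0}"
    then have "killing br (s m) (t (-1-m)) \<noteq> 0" by simp
    then have "\<not> m < N" "\<not> -1 - m < M" using N M by force+
    then show "m \<in> {N..-1-M}" by auto
  qed
  then show ?thesis using finite_subset by blast
qed

lemma kappa0_add_left:
  "\<lbrakk>s \<in> laurent; s' \<in> laurent; t \<in> laurent\<rbrakk> \<Longrightarrow> kappa0 br (s + s') t = kappa0 br s t + kappa0 br s' t"
  unfolding kappa0_def plus_fun_apply killing_add_left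
  by (rule Sum_any.distrib[OF finite_kappa0_support finite_kappa0_support])

lemma kappa0_add_right:
  "\<lbrakk>s \<in> laurent; t \<in> laurent; t' \<in> laurent\<rbrakk> \<Longrightarrow> kappa0 br s (t + t') = kappa0 br s t + kappa0 br s t'"
  unfolding kappa0_def plus_fun_apply killing_add_right
  by (rule Sum_any.distrib[OF finite_kappa0_support finite_kappa0_support])

lemma kappa0_scale_left:
  "\<lbrakk>s \<in> laurent; t \<in> laurent\<rbrakk> \<Longrightarrow> kappa0 br (sscale c s) t = c * kappa0 br s t"
  unfolding kappa0_def sscale_apply killing_scale_left
  by (rule Sum_any_right_distrib[symmetric, OF finite_kappa0_support])

lemma kappa0_scale_right:
  "\<lbrakk>s \<in> laurent; t \<in> laurent\<rbrakk> \<Longrightarrow> kappa0 br s (sscale c t) = c * kappa0 br s t"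
  unfolding kappa0_def sscale_apply killing_scale_right
  by (rule Sum_any_right_distrib[symmetric, OF finite_kappa0_support])

lemma kappa0_zero_left: "kappa0 br 0 s = 0"
  by (simp add: kappa0_def zero_fun_apply)

lemma kappa0_zero_right: "kappa0 br s 0 = 0"
  by (simp add: kappa0_def zero_fun_apply)

lemma kappa0_diff_right:
  assumes "s \<in> laurent" "t \<in> laurent" "t' \<in> laurent"
  shows "kappa0 br s (t - t') = kappa0 br s t - kappa0 br s t'"
proof -
  have "t - t' \<in> laurent"
    using series_subspace_laurent assms series.subspace_diff by blast
  then show ?thesis
    using kappa0_add_right[OF assms(1) assms(3), of "t - t'"] by simp
qed

lemma kappa0_span_orthogonal:
  assumes A: "A \<subseteq> laurent" and C: "C \<subseteq> laurent"
    and orth: "\<And>a c. a \<in> A \<Longrightarrow> c \<in> C \<Longrightarrow> kappa0 br a c = 0"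
    and u: "u \<in> series.span A" and z: "z \<in> series.span C"
  shows "kappa0 br u z = 0"
proof -
  have z_laurent: "z \<in> laurent" using series_span_subset_laurent[OF C] z by blast
  have "series.span C \<subseteq> {t \<in> laurent. kappa0 br a t = 0}" if a: "a \<in> A" for a
  proof (rule series.span_minimal)
    show "C \<subseteq> {t \<in> laurent. kappa0 br a t = 0}" using orth a C by auto
    have "a \<in> laurent" using a A by auto
    then show "series.subspace {t \<in> laurent. kappa0 br a t = 0}"
      using series_subspace_laurent kappa0_add_right kappa0_scale_right kappa0_zero_right
      unfolding series.subspace_def by auto
  qed
  then have "kappa0 br a z = 0" if "a \<in> A" for a using z that by auto
  then have "series.span A \<subseteq> {s \<in> laurent. kappa0 br s z = 0}"
  proof (intro series.span_minimal)
    show "series.subspace {s \<in> laurent. kappa0 br s z = 0}"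
      using series_subspace_laurent kappa0_add_left[OF _ _ z_laurent]
        kappa0_scale_left[OF _ z_laurent] kappa0_zero_left
      unfolding series.subspace_def by auto
  qed (use A in auto)
  then show ?thesis using u by auto
qed

end

section \<open>Families of series with principal parts \<open>b\<^sub>i z\<^bsup>-k-1\<^esup>\<close>\<close>

definition cauchy_principal :: "('n \<Rightarrow> ('n,'k::field) vec) \<Rightarrow> (nat \<Rightarrow> 'n \<Rightarrow> int \<Rightarrow> ('n,'k) vec) \<Rightarrow> bool" where
  "cauchy_principal b F \<longleftrightarrow> (\<forall>k i j. j < 0 \<longrightarrow> F k i j = (if j = - int k - 1 then b i else 0))"

lemma cauchy_principal_laurent: "cauchy_principal b F \<Longrightarrow> F k i \<in> laurent"
  unfolding laurent_def cauchy_principal_def by (auto intro!: exI[of _ "- int k - 1"])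

lemma cauchy_principal_span_laurent:
  "cauchy_principal b F \<Longrightarrow> series.span {F k i | k i. True} \<subseteq> laurent"
  by (rule series_span_subset_laurent) (auto dest: cauchy_principal_laurent)

context killing_basis
begin

lemma kappa0_cauchy_principal:
  assumes F: "cauchy_principal b F" and G: "cauchy_principal b G"
  shows "kappa0 br (F k i) (G l j) = killing br (b i) (G l j (int k)) + killing br (F k i (int l)) (b j)"
proof -
  let ?f = "\<lambda>m. killing br (F k i m) (G l j (-1-m))"
  have "{m. ?f m \<noteq> 0} \<subseteq> {- int k - 1, int l}"
  proof
    fix m assume "m \<in> {m. ?f m \<noteq> 0}"
    then have h: "?f m \<noteq> 0" by simp
    show "m \<in> {- int k - 1, int l}"
    proof (cases "m < 0")
      case True
      then show ?thesis using h F unfolding cauchy_principal_def by (cases "m = - int k - 1") auto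
    next
      case False
      then have "-1 - m = - int l - 1"
        using h G unfolding cauchy_principal_def by (cases "-1 - m = - int l - 1") auto
      then show ?thesis by auto
    qed
  qed
  then have "kappa0 br (F k i) (G l j) = ?f (- int k - 1) + ?f (int l)"
    unfolding kappa0_def by (subst Sum_any.expand_superset) auto
  moreover have "G l j (-1 - int l) = b j"
    using G unfolding cauchy_principal_def by simp
  ultimately show ?thesis
    using F unfolding cauchy_principal_def by simp
qed

lemma kappa0_cauchy_principal_power_series:
  assumes F: "cauchy_principal b F" and p: "\<forall>j<0. p j = 0"
  shows "kappa0 br (F k i) p = killing br (b i) (p (int k))"
proof -
  let ?f = "\<lambda>m. killing br (F k i m) (p (-1-m))"
  have "{m. ?f m \<noteq> 0} \<subseteq> {- int k - 1}"
  proof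
    fix m assume "m \<in> {m. ?f m \<noteq> 0}"
    then have h: "?f m \<noteq> 0" by simp
    then have "m < 0" using p by (cases "m < 0") auto
    then show "m \<in> {- int k - 1}"
      using h F unfolding cauchy_principal_def by (cases "m = - int k - 1") auto
  qed
  then have "kappa0 br (F k i) p = ?f (- int k - 1)"
    unfolding kappa0_def by (subst Sum_any.expand_superset) auto
  then show ?thesis
    using F unfolding cauchy_principal_def by simp
qed

lemma power_series_orthogonal_eq_0:
  assumes F: "cauchy_principal b F" and p: "\<forall>j<0. p j = 0"
    and orth: "\<And>k i. kappa0 br (F k i) p = 0"
  shows "p = 0"
proof
  fix j :: int
  show "p j = 0 j"
  proof (cases "j < 0")
    case True
    then show ?thesis using p by (simp add: zero_fun_def)
  next
    case False
    then obtain k where k: "j = int k" by (metis nonneg_int_cases not_less)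
    have "killing br (p (int k)) (b i) = 0" for i
      using orth kappa0_cauchy_principal_power_series[OF F p] killing_commute by metis
    then show ?thesis using k killing_basis_eq_0_imp by (simp add: zero_fun_def)
  qed
qed

text \<open>Induction on the order of the pole: the coefficient \<open>t\<^sub>-\<^sub>n\<^sub>-\<^sub>1\<close> is removed by
  subtracting \<open>\<Sum>\<^sub>i \<kappa>(t\<^sub>-\<^sub>n\<^sub>-\<^sub>1, b\<^sub>i) G\<^sub>n\<^sub>,\<^sub>i\<close>.\<close>

lemma laurent_eq_span_plus_power_series:
  assumes G: "cauchy_principal b G" and t: "t \<in> laurent"
  shows "\<exists>u p. u \<in> series.span {G k i | k i. True} \<and> (\<forall>j<0. p j = 0) \<and> t = u + p"
proof -
  have "\<exists>u p. u \<in> series.span {G k i | k i. True} \<and> (\<forall>j<0. p j = 0) \<and> t = u + p"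
    if "\<forall>j < - int n. t j = 0" for n t
    using that
  proof (induction n arbitrary: t)
    case 0
    then show ?case
      by (intro exI[of _ 0] exI[of _ t]) (auto simp: series.span_zero)
  next
    case (Suc n)
    define w where "w = (\<Sum>i\<in>UNIV. sscale (killing br (t (- int n - 1)) (b i)) (G n i))"
    have w_apply: "w j = (\<Sum>i\<in>UNIV. vscale (killing br (t (- int n - 1)) (b i)) (G n i j))" for j
      unfolding w_def by (simp add: sum_fun_apply sscale_apply)
    have w_span: "w \<in> series.span {G k i | k i. True}"
      unfolding w_def by (intro series.span_sum series.span_scale series.span_base) auto
    have "(t - w) j = 0" if j: "j < - int n" for j
    proof (cases "j = - int n - 1")
      case True
      then have "w j = t j"
        using G vec_eq_sum_killing_basis[of "t j"] unfolding w_apply cauchy_principal_def by simp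
      then show ?thesis by simp
    next
      case False
      then have "j < - int (Suc n)" using j by simp
      moreover have "w j = 0"
        unfolding w_apply using G False j
        unfolding cauchy_principal_def by (simp add: vscale_def zero_fun_def fun_eq_iff sum_fun_apply)
      ultimately show ?thesis using Suc.prems by simp
    qed
    then obtain u p where "u \<in> series.span {G k i | k i. True}" "\<forall>j<0. p j = 0" "t - w = u + p"
      using Suc.IH by blast
    then show ?case
      using w_span series.span_add by (intro exI[of _ "u + w"] exI[of _ p]) (auto simp: algebra_simps)
  qed
  moreover obtain N where "\<forall>j<N. t j = 0"
    using t by (auto simp: laurent_def)
  then have "\<forall>j < - int (nat (- N)). t j = 0" by auto
  ultimately show ?thesis by blast
qed

lemma kappa0_orth_span_eq:
  assumes F: "cauchy_principal b F" and G: "cauchy_principal b G"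
    and orth: "\<And>k i l j. kappa0 br (F k i) (G l j) = 0"
  shows "kappa0_orth br (series.span {F k i | k i. True}) = series.span {G k i | k i. True}"
    (is "kappa0_orth br ?SF = ?SG")
proof
  have F_laurent: "{F k i | k i. True} \<subseteq> laurent" and G_laurent: "{G k i | k i. True} \<subseteq> laurent"
    using F G by (auto dest: cauchy_principal_laurent)
  have span_orth: "kappa0 br s z = 0" if "s \<in> ?SF" "z \<in> ?SG" for s z
    using kappa0_span_orthogonal[OF F_laurent G_laurent _ that] orth by blast
  have F_span: "F k i \<in> ?SF" for k i
    by (rule series.span_base) auto
  show "?SG \<subseteq> kappa0_orth br ?SF"
    using span_orth cauchy_principal_span_laurent[OF G] unfolding kappa0_orth_def by blast
  show "kappa0_orth br ?SF \<subseteq> ?SG"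
  proof
    fix v assume "v \<in> kappa0_orth br ?SF"
    then have v_laurent: "v \<in> laurent" and v_orth: "\<forall>s\<in>?SF. kappa0 br s v = 0"
      by (auto simp: kappa0_orth_def)
    obtain u p where u: "u \<in> ?SG" and p: "\<forall>j<0. p j = 0" and v: "v = u + p"
      using laurent_eq_span_plus_power_series[OF G v_laurent] by blast
    have u_laurent: "u \<in> laurent"
      using cauchy_principal_span_laurent[OF G] u by blast
    have "kappa0 br (F k i) p = 0" for k i
      using kappa0_diff_right[OF cauchy_principal_laurent[OF F] v_laurent u_laurent]
        v_orth F_span span_orth[OF F_span u] v by simp
    then have "p = 0"
      by (rule power_series_orthogonal_eq_0[OF F p])
    then show "v \<in> ?SG" using u v by simp
  qed
qed

lemma kappa0_orth_span_self_iff: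
  assumes F: "cauchy_principal b F" and G: "cauchy_principal b G"
    and orth_eq: "kappa0_orth br (series.span {F k i | k i. True}) = series.span {G k i | k i. True}"
  shows "kappa0_orth br (series.span {F k i | k i. True}) = series.span {F k i | k i. True} \<longleftrightarrow> G = F"
    (is "kappa0_orth br ?SF = ?SF \<longleftrightarrow> _")
proof
  assume self: "kappa0_orth br ?SF = ?SF"
  have F_span: "F k i \<in> ?SF" for k i
    by (rule series.span_base) auto
  have "G k i = F k i" for k i
  proof -
    have "G k i \<in> series.span {G k i | k i. True}"
      by (rule series.span_base) auto
    then have "G k i \<in> ?SF" "F k i \<in> ?SF"
      using orth_eq self F_span by simp_all
    then have "G k i - F k i \<in> kappa0_orth br ?SF"
      using self series.span_diff by simp
    moreover have "\<forall>j<0. (G k i - F k i) j = 0"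
      using F G by (simp add: cauchy_principal_def)
    ultimately have "G k i - F k i = 0"
      using F_span by (intro power_series_orthogonal_eq_0[OF F]) (auto simp: kappa0_orth_def)
    then show ?thesis by simp
  qed
  then show "G = F" by blast
qed (use orth_eq in simp)

end

section \<open>Components of \<open>r\<close> and \<open>rbar\<close>\<close>

definition contract_right :: "(('n::finite,'k::field) vec \<Rightarrow> ('n,'k) vec \<Rightarrow> ('n,'k) vec) \<Rightarrow> ('n \<Rightarrow> ('n,'k) vec)
      \<Rightarrow> ('n,'k) tens2 \<Rightarrow> 'n \<Rightarrow> ('n,'k) vec" where
  "contract_right br b T i = (\<lambda>p. \<Sum>q\<in>UNIV. T p q * killing br (ei q) (b i))"

lemma component_apply: "component br b s k i j = contract_right br b (s j k) i"
  by (simp add: component_def contract_right_def)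

context killing_basis
begin

lemma contract_right_zero: "contract_right br b 0 i = 0"
  by (simp add: contract_right_def zero_fun_def)

lemma contract_right_uminus: "contract_right br b (- A) i = - contract_right br b A i"
  by (simp add: contract_right_def fun_eq_iff sum_negf)

lemma contract_right_casimir: "contract_right br b (casimir b) i = b i"
proof
  fix p
  have "contract_right br b (casimir b) i p
      = (\<Sum>x\<in>UNIV. b x p * (\<Sum>q\<in>UNIV. b x q * killing br (ei q) (b i)))"
    unfolding contract_right_def casimir_def
    by (simp add: sum_distrib_left sum_distrib_right ac_simps) (rule sum.swap)
  also have "\<dots> = (\<Sum>x\<in>UNIV. b x p * killing br (b x) (b i))"
    by (simp add: killing_coords_left[of "b x" "b i" for x])
  also have "\<dots> = b i p"
    by (simp add: killing_basis_basis if_distrib cong: if_cong)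
  finally show "contract_right br b (casimir b) i p = b i p" .
qed

lemma killing_contract_right_flip2:
  "killing br (b i) (contract_right br b (flip2 A) j) = killing br (contract_right br b A i) (b j)"
proof -
  have "killing br (b i) (contract_right br b (flip2 A) j)
      = (\<Sum>p\<in>UNIV. \<Sum>q\<in>UNIV. A q p * killing br (ei q) (b j) * killing br (ei p) (b i))"
    by (subst killing_coords_right)
      (simp add: contract_right_def flip2_def killing_commute[of "b i"] sum_distrib_right)
  also have "\<dots> = (\<Sum>q\<in>UNIV. (\<Sum>p\<in>UNIV. A q p * killing br (ei p) (b i)) * killing br (ei q) (b j))"
    by (subst sum.swap) (simp add: sum_distrib_left ac_simps)
  also have "\<dots> = killing br (contract_right br b A i) (b j)"
    by (subst (2) killing_coords_left) (simp add: contract_right_def)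
  finally show ?thesis .
qed

lemma contract_right_inject:
  assumes "\<And>i. contract_right br b A i = contract_right br b B i"
  shows "A = B"
proof (intro ext)
  fix p q
  have "(\<lambda>q. A p q - B p q) = 0"
  proof (rule killing_basis_eq_0_imp)
    fix i
    show "killing br (\<lambda>q. A p q - B p q) (b i) = 0"
      using assms[of i]
      by (subst killing_coords_left) (simp add: contract_right_def algebra_simps sum_subtractf fun_eq_iff)
  qed
  then show "A p q = B p q" by (simp add: fun_eq_iff zero_fun_def)
qed

lemma component_inject:
  assumes "component br b s = component br b t"
  shows "s = t"
proof (rule ext, rule ext)
  fix j k
  have "contract_right br b (s j k) i = contract_right br b (t j k) i" for i
    using assms by (simp only: component_apply[symmetric])
  then show "s j k = t j k"
    by (rule contract_right_inject)
qed

lemma cauchy_principal_component: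
  assumes "\<And>i k. i < 0 \<Longrightarrow> s i k = cauchy_kernel (casimir b) i k"
  shows "cauchy_principal b (component br b s)"
  using assms
  by (simp add: cauchy_principal_def component_apply cauchy_kernel_def contract_right_casimir
      contract_right_zero)

lemma cauchy_principal_component_r:
  "normalized_standard_form b r \<Longrightarrow> cauchy_principal b (component br b r)"
  by (rule cauchy_principal_component) (simp add: normalized_standard_form_def)

lemma cauchy_principal_component_rbar: "cauchy_principal b (component br b (rbar b r))"
  by (rule cauchy_principal_component) (simp add: rbar_def)

lemma kappa0_component_rbar:
  assumes r: "normalized_standard_form b r"
  shows "kappa0 br (component br b r k i) (component br b (rbar b r) l j) = 0"
proof -
  have "component br b (rbar b r) l j (int k) = - contract_right br b (flip2 (regular_part b r l k)) j"
    by (simp add: component_apply rbar_def cauchy_kernel_def contract_right_uminus)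
  moreover have "component br b r k i (int l) = contract_right br b (regular_part b r l k) i"
    by (simp add: component_apply regular_part_def cauchy_kernel_def)
  ultimately show ?thesis
    unfolding kappa0_cauchy_principal[OF cauchy_principal_component_r[OF r] cauchy_principal_component_rbar]
    by (simp only: killing_uminus_right killing_contract_right_flip2) simp
qed

end

theorem lemma1p19:
  fixes br :: "('n::finite \<Rightarrow> 'k::field_char_0) \<Rightarrow> ('n \<Rightarrow> 'k) \<Rightarrow> ('n \<Rightarrow> 'k)"
    and b :: "'n \<Rightarrow> ('n \<Rightarrow> 'k)"
    and r :: "int \<Rightarrow> nat \<Rightarrow> 'n \<Rightarrow> 'n \<Rightarrow> 'k"
  assumes "lie_algebra br"
    and "semisimple br"
    and "killing_orthonormal br b"
    and "normalized_formal_gen_r_matrix br b r"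
  shows "kappa0_orth br (g_of br b r) = g_of br b (rbar b r)
    \<and> (skew_symmetric b r \<longleftrightarrow> kappa0_orth br (g_of br b r) = g_of br b r)"
proof -
  interpret killing_basis br b
    using assms(1,3) by unfold_locales
  have r: "normalized_standard_form b r"
    using assms(4) by (simp add: normalized_formal_gen_r_matrix_def)
  note F = cauchy_principal_component_r[OF r] and G = cauchy_principal_component_rbar
  have g_of_span: "g_of br b s = series.span {component br b s k i | k i. True}" for s
    by (simp add: g_of_def lin_span_sscale)
  have orth: "kappa0_orth br (g_of br b r) = g_of br b (rbar b r)"
    unfolding g_of_span using kappa0_orth_span_eq[OF F G kappa0_component_rbar[OF r]] .
  have "skew_symmetric b r \<longleftrightarrow> component br b (rbar b r) = component br b r"
    unfolding skew_symmetric_def using component_inject by metis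
  also have "\<dots> \<longleftrightarrow> kappa0_orth br (g_of br b r) = g_of br b r"
    using kappa0_orth_span_self_iff[OF F G orth[unfolded g_of_span]] unfolding g_of_span by simp
  finally show ?thesis
    using orth by simp
qed

end
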